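(* Let $(A,\diamond,\ast,\varepsilon)$ be a pre-$F$-manifold color algebra, and define for homogeneous $x,y\in A$ (extended bilinearly) $x\cdot y=x\diamond y+\varepsilon(x,y)\,y\diamond x$ and $[x,y]=x\ast y-\varepsilon(x,y)\,y\ast x$. Then: (1) $(A,\cdot,[\,,\,],\varepsilon)$ is an $F$-manifold color algebra; (2) $(A,L,\mathfrak L)$ is a representation of the $F$-manifold color algebra $(A,\cdot,[\,,\,],\varepsilon)$, where $L,\mathfrak L:A\to\mathfrak{gl}(A)$ are given by $L_x y=x\ast y$ and $\mathfrak L_x y=x\diamond y$.
   Context: $G$ is an abelian group and $\varepsilon:G\times G\to\mathbb K\setminus\{0\}$ a skew-symmetric bicharacter: $\varepsilon(a,b)\varepsilon(b,a)=1$, $\varepsilon(a,b+c)=\varepsilon(a,b)\varepsilon(a,c)$, $\varepsilon(a+b,c)=\varepsilon(a,c)\varepsilon(b,c)$; $\mathbb K$ algebraically closed of characteristic zero, spaces finite-dimensional. For homogeneous $x\in A_a,y\in A_b$, $\varepsilon(x,y)$ means $\varepsilon(a,b)$, $\varepsilon(x,y+z)$ means $\varepsilon(a,b+c)$, etc. A Zinbiel color algebra $(A,\diamond,\varepsilon)$: $G$-graded $A$ with bilinear $\diamond$, $A_a\diamond A_b\subseteq A_{a+b}$, $x\diamond(y\diamond z)=(x\diamond y)\diamond z+\varepsilon(x,y)(y\diamond x)\diamond z$. A pre-Lie color algebra $(A,\ast,\varepsilon)$: $G$-graded $A$ with bilinear $\ast$, $A_a\ast A_b\subseteq A_{a+b}$,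 $(x\ast y)\ast z-x\ast(y\ast z)=\varepsilon(x,y)((y\ast x)\ast z-y\ast(x\ast z))$. A pre-$F$-manifold color algebra $(A,\diamond,\ast,\varepsilon)$ is such that $(A,\diamond,\varepsilon)$ is a Zinbiel color algebra, $(A,\ast,\varepsilon)$ is a pre-Lie color algebra, and for all homogeneous $x,y,z,w$: $F_1(x\cdot y,z,w)=x\diamond F_1(y,z,w)+\varepsilon(x,y)y\diamond F_1(x,z,w)$ and $(F_1(x,y,z)+\varepsilon(y,z)F_1(x,z,y)+\varepsilon(x,y+z)F_2(y,z,x))\diamond w=\varepsilon(x,y+z)F_2(y,z,x\diamond w)-x\diamond F_2(y,z,w)$, where $F_1(x,y,z)=x\ast(y\diamond z)-\varepsilon(x,y)y\diamond(x\ast z)-[x,y]\diamond z$ and $F_2(x,y,z)=x\diamond(y\ast z)+\varepsilon(x,y)y\diamond(x\ast z)-(x\cdot y)\ast z$, with $\cdot$ and $[\,,\,]$ as in the claim. An $\varepsilon$-commutative associative algebra: $G$-graded associative $(A,\cdot)$ with $A_aA_b\subseteq A_{a+b}$ and $x\cdot y=\varepsilon(x,y)y\cdot x$. A Lie color algebra: $G$-graded with bilinear $[\,,\,]$, $[A_a,A_b]\subseteq A_{a+b}$, $[x,y]=-\varepsilon(x,y)[y,x]$, $\varepsilon(z,x)[x,[y,z]]+\varepsilon(y,z)[z,[x,y]]+\varepsilon(x,y)[y,[z,x]]=0$. An $F$-manifold color algebra is $(A,\cdot,[\,,\,],\varepsilon)$ with $(A,\cdot,\varepsilon)$ an $\varepsilon$-commutative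 associative algebra and $(A,[\,,\,],\varepsilon)$ a Lie color algebra such that $P_{x\cdot y}(z,w)=x\cdot P_y(z,w)+\varepsilon(x,y)y\cdot P_x(z,w)$, where $P_x(y,z)=[x,y\cdot z]-[x,y]\cdot z-\varepsilon(x,y)y\cdot[x,z]$. A representation of such an $A$ on a $G$-graded space $V$ is a triple $(V,\rho,\mu)$ where $\rho:A\to\mathfrak{gl}(V)$ satisfies $\rho(x)V_a\subseteq V_{a+b}$ for $x\in A_b$ and $\rho([x,y])=\rho(x)\rho(y)-\varepsilon(x,y)\rho(y)\rho(x)$, $\mu:A\to\mathfrak{gl}(V)$ satisfies the same degree condition and $\mu(x\cdot y)=\mu(x)\mu(y)$, and for all homogeneous $x_1,x_2,x_3$: $R(x_1\cdot x_2,x_3)=\mu(x_1)R(x_2,x_3)+\varepsilon(x_1,x_2)\mu(x_2)R(x_1,x_3)$ and $\mu(P_{x_1}(x_2,x_3))=\varepsilon(x_1,x_2+x_3)S(x_2,x_3)\mu(x_1)-\mu(x_1)S(x_2,x_3)$, where $R(x_1,x_2)=\rho(x_1)\mu(x_2)-\varepsilon(x_1,x_2)\mu(x_2)\rho(x_1)-\mu([x_1,x_2])$ and $S(x_1,x_2)=\mu(x_1)\rho(x_2)+\varepsilon(x_1,x_2)\mu(x_2)\rho(x_1)-\rho(x_1\cdot x_2)$. *)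

theory Defs
  imports "HOL-Computational_Algebra.Polynomial"
begin

definition alg_closed_field :: "'k::field itself \<Rightarrow> bool" where
  "alg_closed_field _ \<longleftrightarrow> (\<forall>p :: 'k poly. 0 < degree p \<longrightarrow> (\<exists>x. poly p x = 0))"

definition skew_bicharacter :: "('g::ab_group_add \<Rightarrow> 'g \<Rightarrow> 'k::field) \<Rightarrow> bool" where
  "skew_bicharacter eps \<longleftrightarrow>
     (\<forall>a b. eps a b \<noteq> 0) \<and>
     (\<forall>a b. eps a b * eps b a = 1) \<and>
     (\<forall>a b c. eps a (b + c) = eps a b * eps a c) \<and>
     (\<forall>a b c. eps (a + b) c = eps a c * eps b c)"

text \<open>A G-graded vector space: the whole type 'v is the space (with scalar
multiplication s), V g is the homogeneous component of degree g, and the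
space is the direct sum of the V g.\<close>

definition graded_space :: "('k::field \<Rightarrow> 'v::ab_group_add \<Rightarrow> 'v) \<Rightarrow> ('g \<Rightarrow> 'v set) \<Rightarrow> bool" where
  "graded_space s V \<longleftrightarrow>
     vector_space s \<and> (\<forall>g. module.subspace s (V g)) \<and>
     (\<forall>v. \<exists>!c. finite {g. c g \<noteq> 0} \<and> (\<forall>g. c g \<in> V g) \<and> v = (\<Sum>g\<in>{g. c g \<noteq> 0}. c g))"

definition fin_dim :: "('k::field \<Rightarrow> 'v::ab_group_add \<Rightarrow> 'v) \<Rightarrow> bool" where
  "fin_dim s \<longleftrightarrow> (\<exists>B. finite B \<and> module.span s B = UNIV)"

definition grcomp :: "('g \<Rightarrow> 'v::ab_group_add set) \<Rightarrow> 'v \<Rightarrow> 'g \<Rightarrow> 'v" where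
  "grcomp V v = (THE c. finite {g. c g \<noteq> 0} \<and> (\<forall>g. c g \<in> V g) \<and> v = (\<Sum>g\<in>{g. c g \<noteq> 0}. c g))"

definition grext :: "('g \<Rightarrow> 'v::ab_group_add set) \<Rightarrow> ('g \<Rightarrow> 'g \<Rightarrow> 'v \<Rightarrow> 'v \<Rightarrow> 'v) \<Rightarrow> 'v \<Rightarrow> 'v \<Rightarrow> 'v" where
  "grext V f x y = (\<Sum>a\<in>{a. grcomp V x a \<noteq> 0}. \<Sum>b\<in>{b. grcomp V y b \<noteq> 0}.
       f a b (grcomp V x a) (grcomp V y b))"

definition ind_dot :: "('k::field \<Rightarrow> 'v::ab_group_add \<Rightarrow> 'v) \<Rightarrow> ('g \<Rightarrow> 'v set) \<Rightarrow> ('g \<Rightarrow> 'g \<Rightarrow> 'k)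
    \<Rightarrow> ('v \<Rightarrow> 'v \<Rightarrow> 'v) \<Rightarrow> 'v \<Rightarrow> 'v \<Rightarrow> 'v" where
  "ind_dot s V eps d = grext V (\<lambda>a b x y. d x y + s (eps a b) (d y x))"

definition ind_bracket :: "('k::field \<Rightarrow> 'v::ab_group_add \<Rightarrow> 'v) \<Rightarrow> ('g \<Rightarrow> 'v set) \<Rightarrow> ('g \<Rightarrow> 'g \<Rightarrow> 'k)
    \<Rightarrow> ('v \<Rightarrow> 'v \<Rightarrow> 'v) \<Rightarrow> 'v \<Rightarrow> 'v \<Rightarrow> 'v" where
  "ind_bracket s V eps m = grext V (\<lambda>a b x y. m x y - s (eps a b) (m y x))"

definition bilinear_map :: "('k::field \<Rightarrow> 'u::ab_group_add \<Rightarrow> 'u) \<Rightarrow> ('k \<Rightarrow> 'v::ab_group_add \<Rightarrow> 'v)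
    \<Rightarrow> ('k \<Rightarrow> 'w::ab_group_add \<Rightarrow> 'w) \<Rightarrow> ('u \<Rightarrow> 'v \<Rightarrow> 'w) \<Rightarrow> bool" where
  "bilinear_map s1 s2 s3 f \<longleftrightarrow>
     (\<forall>x. Vector_Spaces.linear s2 s3 (f x)) \<and> (\<forall>y. Vector_Spaces.linear s1 s3 (\<lambda>x. f x y))"

definition graded_op :: "('g::ab_group_add \<Rightarrow> 'u set) \<Rightarrow> ('g \<Rightarrow> 'v set) \<Rightarrow> ('u \<Rightarrow> 'v \<Rightarrow> 'v) \<Rightarrow> bool" where
  "graded_op U V f \<longleftrightarrow> (\<forall>a b x y. x \<in> U a \<longrightarrow> y \<in> V b \<longrightarrow> f x y \<in> V (a + b))"

definition zinbiel_color :: "('k::field \<Rightarrow> 'v::ab_group_add \<Rightarrow> 'v) \<Rightarrow> ('g::ab_group_add \<Rightarrow> 'v set)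
    \<Rightarrow> ('g \<Rightarrow> 'g \<Rightarrow> 'k) \<Rightarrow> ('v \<Rightarrow> 'v \<Rightarrow> 'v) \<Rightarrow> bool" where
  "zinbiel_color s V eps d \<longleftrightarrow> graded_space s V \<and> bilinear_map s s s d \<and> graded_op V V d \<and>
     (\<forall>a b c x y z. x \<in> V a \<longrightarrow> y \<in> V b \<longrightarrow> z \<in> V c \<longrightarrow>
        d x (d y z) = d (d x y) z + s (eps a b) (d (d y x) z))"

definition prelie_color :: "('k::field \<Rightarrow> 'v::ab_group_add \<Rightarrow> 'v) \<Rightarrow> ('g::ab_group_add \<Rightarrow> 'v set)
    \<Rightarrow> ('g \<Rightarrow> 'g \<Rightarrow> 'k) \<Rightarrow> ('v \<Rightarrow> 'v \<Rightarrow> 'v) \<Rightarrow> bool" where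
  "prelie_color s V eps m \<longleftrightarrow> graded_space s V \<and> bilinear_map s s s m \<and> graded_op V V m \<and>
     (\<forall>a b c x y z. x \<in> V a \<longrightarrow> y \<in> V b \<longrightarrow> z \<in> V c \<longrightarrow>
        m (m x y) z - m x (m y z) = s (eps a b) (m (m y x) z - m y (m x z)))"

text \<open>F1 and F2; the degree arguments a, b are those of the first two arguments.\<close>
definition F1 :: "('k::field \<Rightarrow> 'v::ab_group_add \<Rightarrow> 'v) \<Rightarrow> ('g::ab_group_add \<Rightarrow> 'v set)
    \<Rightarrow> ('g \<Rightarrow> 'g \<Rightarrow> 'k) \<Rightarrow> ('v \<Rightarrow> 'v \<Rightarrow> 'v) \<Rightarrow> ('v \<Rightarrow> 'v \<Rightarrow> 'v) \<Rightarrow> 'g \<Rightarrow> 'g \<Rightarrow> 'v \<Rightarrow> 'v \<Rightarrow> 'v \<Rightarrow> 'v" where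
  "F1 s V eps d m a b x y z =
     m x (d y z) - s (eps a b) (d y (m x z)) - d (ind_bracket s V eps m x y) z"

definition F2 :: "('k::field \<Rightarrow> 'v::ab_group_add \<Rightarrow> 'v) \<Rightarrow> ('g::ab_group_add \<Rightarrow> 'v set)
    \<Rightarrow> ('g \<Rightarrow> 'g \<Rightarrow> 'k) \<Rightarrow> ('v \<Rightarrow> 'v \<Rightarrow> 'v) \<Rightarrow> ('v \<Rightarrow> 'v \<Rightarrow> 'v) \<Rightarrow> 'g \<Rightarrow> 'g \<Rightarrow> 'v \<Rightarrow> 'v \<Rightarrow> 'v \<Rightarrow> 'v" where
  "F2 s V eps d m a b x y z =
     d x (m y z) + s (eps a b) (d y (m x z)) - m (ind_dot s V eps d x y) z"

definition pre_F_manifold_color :: "('k::field \<Rightarrow> 'v::ab_group_add \<Rightarrow> 'v) \<Rightarrow> ('g::ab_group_add \<Rightarrow> 'v set)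
    \<Rightarrow> ('g \<Rightarrow> 'g \<Rightarrow> 'k) \<Rightarrow> ('v \<Rightarrow> 'v \<Rightarrow> 'v) \<Rightarrow> ('v \<Rightarrow> 'v \<Rightarrow> 'v) \<Rightarrow> bool" where
  "pre_F_manifold_color s V eps d m \<longleftrightarrow>
     zinbiel_color s V eps d \<and> prelie_color s V eps m \<and>
     (\<forall>a b c e x y z w. x \<in> V a \<longrightarrow> y \<in> V b \<longrightarrow> z \<in> V c \<longrightarrow> w \<in> V e \<longrightarrow>
        F1 s V eps d m (a + b) c (ind_dot s V eps d x y) z w =
          d x (F1 s V eps d m b c y z w) + s (eps a b) (d y (F1 s V eps d m a c x z w))) \<and>
     (\<forall>a b c e x y z w. x \<in> V a \<longrightarrow> y \<in> V b \<longrightarrow> z \<in> V c \<longrightarrow> w \<in> V e \<longrightarrow>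
        d (F1 s V eps d m a b x y z + s (eps b c) (F1 s V eps d m a c x z y)
             + s (eps a (b + c)) (F2 s V eps d m b c y z x)) w =
          s (eps a (b + c)) (F2 s V eps d m b c y z (d x w)) - d x (F2 s V eps d m b c y z w))"

definition eps_comm_assoc :: "('k::field \<Rightarrow> 'v::ab_group_add \<Rightarrow> 'v) \<Rightarrow> ('g::ab_group_add \<Rightarrow> 'v set)
    \<Rightarrow> ('g \<Rightarrow> 'g \<Rightarrow> 'k) \<Rightarrow> ('v \<Rightarrow> 'v \<Rightarrow> 'v) \<Rightarrow> bool" where
  "eps_comm_assoc s V eps p \<longleftrightarrow> graded_space s V \<and> bilinear_map s s s p \<and> graded_op V V p \<and>
     (\<forall>x y z. p (p x y) z = p x (p y z)) \<and>
     (\<forall>a b x y. x \<in> V a \<longrightarrow> y \<in> V b \<longrightarrow> p x y = s (eps a b) (p y x))"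

definition lie_color :: "('k::field \<Rightarrow> 'v::ab_group_add \<Rightarrow> 'v) \<Rightarrow> ('g::ab_group_add \<Rightarrow> 'v set)
    \<Rightarrow> ('g \<Rightarrow> 'g \<Rightarrow> 'k) \<Rightarrow> ('v \<Rightarrow> 'v \<Rightarrow> 'v) \<Rightarrow> bool" where
  "lie_color s V eps br \<longleftrightarrow> graded_space s V \<and> bilinear_map s s s br \<and> graded_op V V br \<and>
     (\<forall>a b x y. x \<in> V a \<longrightarrow> y \<in> V b \<longrightarrow> br x y = - s (eps a b) (br y x)) \<and>
     (\<forall>a b c x y z. x \<in> V a \<longrightarrow> y \<in> V b \<longrightarrow> z \<in> V c \<longrightarrow>
        s (eps c a) (br x (br y z)) + s (eps b c) (br z (br x y)) + s (eps a b) (br y (br z x)) = 0)"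

text \<open>P_x(y,z); a, b are the degrees of x, y.\<close>
definition Pfm :: "('k::field \<Rightarrow> 'v::ab_group_add \<Rightarrow> 'v) \<Rightarrow> ('g \<Rightarrow> 'g \<Rightarrow> 'k)
    \<Rightarrow> ('v \<Rightarrow> 'v \<Rightarrow> 'v) \<Rightarrow> ('v \<Rightarrow> 'v \<Rightarrow> 'v) \<Rightarrow> 'g \<Rightarrow> 'g \<Rightarrow> 'v \<Rightarrow> 'v \<Rightarrow> 'v \<Rightarrow> 'v" where
  "Pfm s eps p br a b x y z = br x (p y z) - p (br x y) z - s (eps a b) (p y (br x z))"

definition F_manifold_color :: "('k::field \<Rightarrow> 'v::ab_group_add \<Rightarrow> 'v) \<Rightarrow> ('g::ab_group_add \<Rightarrow> 'v set)
    \<Rightarrow> ('g \<Rightarrow> 'g \<Rightarrow> 'k) \<Rightarrow> ('v \<Rightarrow> 'v \<Rightarrow> 'v) \<Rightarrow> ('v \<Rightarrow> 'v \<Rightarrow> 'v) \<Rightarrow> bool" where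
  "F_manifold_color s V eps p br \<longleftrightarrow> eps_comm_assoc s V eps p \<and> lie_color s V eps br \<and>
     (\<forall>a b c x y z w. x \<in> V a \<longrightarrow> y \<in> V b \<longrightarrow> z \<in> V c \<longrightarrow>
        Pfm s eps p br (a + b) c (p x y) z w =
          p x (Pfm s eps p br b c y z w) + s (eps a b) (p y (Pfm s eps p br a c x z w)))"

text \<open>Operator identities
are stated pointwise on all vectors v of W.\<close>
definition fm_representation :: "('k::field \<Rightarrow> 'v::ab_group_add \<Rightarrow> 'v) \<Rightarrow> ('g::ab_group_add \<Rightarrow> 'v set)
    \<Rightarrow> ('g \<Rightarrow> 'g \<Rightarrow> 'k) \<Rightarrow> ('v \<Rightarrow> 'v \<Rightarrow> 'v) \<Rightarrow> ('v \<Rightarrow> 'v \<Rightarrow> 'v)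
    \<Rightarrow> ('k \<Rightarrow> 'w::ab_group_add \<Rightarrow> 'w) \<Rightarrow> ('g \<Rightarrow> 'w set)
    \<Rightarrow> ('v \<Rightarrow> 'w \<Rightarrow> 'w) \<Rightarrow> ('v \<Rightarrow> 'w \<Rightarrow> 'w) \<Rightarrow> bool" where
  "fm_representation s V eps p br sW VW rho mu \<longleftrightarrow>
     graded_space sW VW \<and>
     bilinear_map s sW sW rho \<and> graded_op V VW rho \<and>
     bilinear_map s sW sW mu \<and> graded_op V VW mu \<and>
     (\<forall>a b x y v. x \<in> V a \<longrightarrow> y \<in> V b \<longrightarrow>
        rho (br x y) v = rho x (rho y v) - sW (eps a b) (rho y (rho x v))) \<and>
     (\<forall>x y v. mu (p x y) v = mu x (mu y v)) \<and>
     (let R = (\<lambda>a b x1 x2 v. rho x1 (mu x2 v) - sW (eps a b) (mu x2 (rho x1 v)) - mu (br x1 x2) v);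
          S = (\<lambda>a b x1 x2 v. mu x1 (rho x2 v) + sW (eps a b) (mu x2 (rho x1 v)) - rho (p x1 x2) v)
      in (\<forall>a b c x1 x2 x3 v. x1 \<in> V a \<longrightarrow> x2 \<in> V b \<longrightarrow> x3 \<in> V c \<longrightarrow>
            R (a + b) c (p x1 x2) x3 v = mu x1 (R b c x2 x3 v) + sW (eps a b) (mu x2 (R a c x1 x3 v))) \<and>
         (\<forall>a b c x1 x2 x3 v. x1 \<in> V a \<longrightarrow> x2 \<in> V b \<longrightarrow> x3 \<in> V c \<longrightarrow>
            mu (Pfm s eps p br a b x1 x2 x3) v =
              sW (eps a (b + c)) (S b c x2 x3 (mu x1 v)) - mu x1 (S b c x2 x3 v)))"

end

theory Submission
  imports Defs
begin

text \<open>
  Write \<open>L\<^bsub>x\<^esub> y = x \<star> y\<close> and \<open>\<L>\<^bsub>x\<^esub> y = x \<diamond> y\<close>. On homogeneous elements the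
  Zinbiel identity says exactly \<open>\<L>\<^bsub>x\<cdot>y\<^esub> = \<L>\<^bsub>x\<^esub> \<L>\<^bsub>y\<^esub>\<close>, which yields associativity
  of the \<open>\<epsilon>\<close>-commutative product \<open>x \<cdot> y = x \<diamond> y + \<epsilon>(x,y) y \<diamond> x\<close>; the pre-Lie
  identity says \<open>L\<^bsub>[x,y]\<^esub> = L\<^bsub>x\<^esub> L\<^bsub>y\<^esub> - \<epsilon>(x,y) L\<^bsub>y\<^esub> L\<^bsub>x\<^esub>\<close>, which yields the Jacobi
  identity. These are also the first two axioms of the representation \<open>(A, L, \<L>)\<close>.
  Everything else rests on the identity
  \<open>P\<^bsub>x\<^esub>(y,z) = F\<^sub>1(x,y,z) + \<epsilon>(y,z) F\<^sub>1(x,z,y) + \<epsilon>(x,y+z) F\<^sub>2(y,z,x)\<close>: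
  the operators \<open>R\<close> and \<open>S\<close> of the representation are \<open>F\<^sub>1\<close> and \<open>F\<^sub>2\<close>, so the two
  pre-F-manifold axioms are the remaining representation axioms, and expanding
  \<open>P\<^bsub>x\<cdot>y\<^esub>(z,w)\<close> with both of them gives the Hertling-Manin relation.
  All identities are multilinear, so it suffices to verify them on homogeneous
  elements; \<open>\<cdot>\<close> and \<open>[_,_]\<close> are defined there and extended bilinearly through the
  decomposition into homogeneous components.
\<close>

lemma bilinear_map_simps:
  assumes "bilinear_map s1 s2 s3 f"
  shows "f (x + x') y = f x y + f x' y" "f x (y + y') = f x y + f x y'"
    and "f (x - x') y = f x y - f x' y" "f x (y - y') = f x y - f x y'"
    and "f (- x) y = - f x y" "f x (- y) = - f x y"
    and "f (s1 c x) y = s3 c (f x y)" "f x (s2 c y) = s3 c (f x y)"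
    and "f 0 y = 0" "f x 0 = 0"
proof -
  have L: "module_hom s1 s3 (\<lambda>x. f x y)" for y
    using assms by (simp add: bilinear_map_def module_hom_iff_linear)
  have R: "module_hom s2 s3 (f x)" for x
    using assms by (simp add: bilinear_map_def module_hom_iff_linear)
  show "f (x + x') y = f x y + f x' y" "f x (y + y') = f x y + f x y'"
    "f (x - x') y = f x y - f x' y" "f x (y - y') = f x y - f x y'"
    "f (- x) y = - f x y" "f x (- y) = - f x y"
    "f (s1 c x) y = s3 c (f x y)" "f x (s2 c y) = s3 c (f x y)"
    "f 0 y = 0" "f x 0 = 0"
    by (simp_all add: module_hom.add[OF L] module_hom.add[OF R] module_hom.diff[OF L]
        module_hom.diff[OF R] module_hom.neg[OF L] module_hom.neg[OF R] module_hom.scale[OF L]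
        module_hom.scale[OF R] module_hom.zero[OF L] module_hom.zero[OF R])
qed

lemma bilinear_map_swap:
  "bilinear_map s1 s2 s3 f \<Longrightarrow> bilinear_map s2 s1 s3 (\<lambda>y x. f x y)"
  by (simp add: bilinear_map_def)

abbreviation grsupp :: "('g \<Rightarrow> 'v::ab_group_add set) \<Rightarrow> 'v \<Rightarrow> 'g set" where
  "grsupp V v \<equiv> {g. grcomp V v g \<noteq> 0}"

lemma grext_swap: "grext V f x y = grext V (\<lambda>b a v u. f a b u v) y x"
  unfolding grext_def by (rule sum.swap)

section \<open>Graded vector spaces and bilinear extension\<close>

context
  fixes s :: "'k::field \<Rightarrow> 'v::ab_group_add \<Rightarrow> 'v" and V :: "'g \<Rightarrow> 'v set"
  assumes graded: "graded_space s V"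
begin

lemma graded_module: "module s"
  using graded by (simp add: graded_space_def module_iff_vector_space)

lemma homogeneous_subspace: "module.subspace s (V g)"
  using graded by (simp add: graded_space_def)

lemma homogeneous_zero: "0 \<in> V g"
  using module.subspace_0[OF graded_module homogeneous_subspace] .

lemma homogeneous_add: "x \<in> V g \<Longrightarrow> y \<in> V g \<Longrightarrow> x + y \<in> V g"
  using module.subspace_add[OF graded_module homogeneous_subspace] .

lemma homogeneous_diff: "x \<in> V g \<Longrightarrow> y \<in> V g \<Longrightarrow> x - y \<in> V g"
  using module.subspace_diff[OF graded_module homogeneous_subspace] .

lemma homogeneous_scale: "x \<in> V g \<Longrightarrow> s c x \<in> V g"
  using module.subspace_scale[OF graded_module homogeneous_subspace] .

lemma grcomp_decomposition:
  "finite (grsupp V v) \<and> (\<forall>g. grcomp V v g \<in> V g) \<and> v = (\<Sum>g\<in>grsupp V v. grcomp V v g)"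
proof -
  have "\<exists>!c. finite {g. c g \<noteq> 0} \<and> (\<forall>g. c g \<in> V g) \<and> v = (\<Sum>g\<in>{g. c g \<noteq> 0}. c g)"
    using graded by (simp add: graded_space_def)
  from theI'[OF this] show ?thesis unfolding grcomp_def .
qed

lemma finite_grsupp: "finite (grsupp V v)"
  using grcomp_decomposition by blast

lemma grcomp_homogeneous: "grcomp V v g \<in> V g"
  using grcomp_decomposition by blast

lemma sum_grcomp:
  assumes "finite A" "grsupp V v \<subseteq> A"
  shows "(\<Sum>g\<in>A. grcomp V v g) = v"
proof -
  have "(\<Sum>g\<in>A. grcomp V v g) = (\<Sum>g\<in>grsupp V v. grcomp V v g)"
    using assms by (intro sum.mono_neutral_right) auto
  then show ?thesis using grcomp_decomposition[of v] by simp
qed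

lemma grcomp_unique:
  assumes "finite {g. c g \<noteq> 0}" "\<forall>g. c g \<in> V g" "v = (\<Sum>g\<in>{g. c g \<noteq> 0}. c g)"
  shows "grcomp V v = c"
  unfolding grcomp_def
  by (rule the1_equality) (use graded assms in \<open>simp_all add: graded_space_def\<close>)

lemma grcomp_of_homogeneous:
  assumes "x \<in> V a"
  shows "grcomp V x = (\<lambda>g. if g = a then x else 0)"
proof (rule grcomp_unique)
  have supp: "{g. (if g = a then x else 0) \<noteq> 0} = (if x = 0 then {} else {a})" by auto
  show "finite {g. (if g = a then x else 0) \<noteq> 0}" unfolding supp by simp
  show "\<forall>g. (if g = a then x else 0) \<in> V g" using assms homogeneous_zero by auto
  show "x = (\<Sum>g\<in>{g. (if g = a then x else 0) \<noteq> 0}. if g = a then x else 0)" unfolding supp by simp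
qed

lemma grcomp_add: "grcomp V (x + y) = (\<lambda>g. grcomp V x g + grcomp V y g)"
proof (rule grcomp_unique)
  let ?A = "grsupp V x \<union> grsupp V y"
  have A: "finite ?A" "{g. grcomp V x g + grcomp V y g \<noteq> 0} \<subseteq> ?A"
    using finite_grsupp by auto
  then show "finite {g. grcomp V x g + grcomp V y g \<noteq> 0}" by (rule finite_subset[rotated])
  show "\<forall>g. grcomp V x g + grcomp V y g \<in> V g"
    using grcomp_homogeneous homogeneous_add by blast
  have "(\<Sum>g\<in>{g. grcomp V x g + grcomp V y g \<noteq> 0}. grcomp V x g + grcomp V y g)
      = (\<Sum>g\<in>?A. grcomp V x g + grcomp V y g)"
    using A by (intro sum.mono_neutral_left) auto
  also have "\<dots> = x + y"
    using A(1) by (simp add: sum.distrib sum_grcomp)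
  finally show "x + y = (\<Sum>g\<in>{g. grcomp V x g + grcomp V y g \<noteq> 0}. grcomp V x g + grcomp V y g)" ..
qed

lemma grcomp_scale: "grcomp V (s c x) = (\<lambda>g. s c (grcomp V x g))"
proof (rule grcomp_unique)
  have A: "{g. s c (grcomp V x g) \<noteq> 0} \<subseteq> grsupp V x"
    using module.scale_zero_right[OF graded_module] by auto
  then show "finite {g. s c (grcomp V x g) \<noteq> 0}" using finite_grsupp finite_subset by blast
  show "\<forall>g. s c (grcomp V x g) \<in> V g" using grcomp_homogeneous homogeneous_scale by blast
  have "(\<Sum>g\<in>{g. s c (grcomp V x g) \<noteq> 0}. s c (grcomp V x g)) = (\<Sum>g\<in>grsupp V x. s c (grcomp V x g))"
    using A finite_grsupp by (intro sum.mono_neutral_left) auto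
  also have "\<dots> = s c x"
    using finite_grsupp by (simp add: module.scale_sum_right[OF graded_module, symmetric] sum_grcomp)
  finally show "s c x = (\<Sum>g\<in>{g. s c (grcomp V x g) \<noteq> 0}. s c (grcomp V x g))" ..
qed

lemma graded_induct:
  assumes "P 0" "\<And>x y. P x \<Longrightarrow> P y \<Longrightarrow> P (x + y)" "\<And>a x. x \<in> V a \<Longrightarrow> P x"
  shows "P v"
proof -
  have "P (\<Sum>g\<in>A. grcomp V v g)" if "finite A" for A
    using that
  proof induction
    case (insert g A)
    then show ?case by (simp add: assms(2)[OF assms(3)[OF grcomp_homogeneous]])
  qed (simp add: assms(1))
  from this[OF finite_grsupp[of v]] show ?thesis
    by (simp only: sum_grcomp[OF finite_grsupp order_refl])
qed

context
  fixes f :: "'g \<Rightarrow> 'g \<Rightarrow> 'v \<Rightarrow> 'v \<Rightarrow> 'v"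
  assumes bilinear: "\<And>a b. bilinear_map s s s (f a b)"
begin

lemma grext_eq_sum:
  assumes "finite A" "grsupp V x \<subseteq> A" "finite B" "grsupp V y \<subseteq> B"
  shows "grext V f x y = (\<Sum>a\<in>A. \<Sum>b\<in>B. f a b (grcomp V x a) (grcomp V y b))"
proof -
  note zero = bilinear_map_simps(9,10)[OF bilinear]
  have "grext V f x y = (\<Sum>a\<in>A. \<Sum>b\<in>grsupp V y. f a b (grcomp V x a) (grcomp V y b))"
    unfolding grext_def by (rule sum.mono_neutral_left) (use assms zero in auto)
  also have "\<dots> = (\<Sum>a\<in>A. \<Sum>b\<in>B. f a b (grcomp V x a) (grcomp V y b))"
    by (intro sum.cong refl sum.mono_neutral_left) (use assms zero in auto)
  finally show ?thesis .
qed

lemma grext_of_homogeneous: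
  assumes x: "x \<in> V a" and y: "y \<in> V b"
  shows "grext V f x y = f a b x y"
proof -
  have "grext V f x y = (\<Sum>a'\<in>{a}. \<Sum>b'\<in>{b}. f a' b' (grcomp V x a') (grcomp V y b'))"
    by (rule grext_eq_sum) (auto simp: grcomp_of_homogeneous[OF x] grcomp_of_homogeneous[OF y])
  then show ?thesis by (simp add: grcomp_of_homogeneous[OF x] grcomp_of_homogeneous[OF y])
qed

lemma grext_linear_left: "Vector_Spaces.linear s s (\<lambda>x. grext V f x y)"
proof -
  have "grext V f (x + x') y = grext V f x y + grext V f x' y" for x x'
  proof -
    let ?A = "grsupp V x \<union> grsupp V x' \<union> grsupp V (x + x')"
    have "grext V f u y = (\<Sum>a\<in>?A. \<Sum>b\<in>grsupp V y. f a b (grcomp V u a) (grcomp V y b))"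
      if "u \<in> {x, x', x + x'}" for u
      using that finite_grsupp by (intro grext_eq_sum) auto
    then show ?thesis by (simp add: grcomp_add bilinear_map_simps[OF bilinear] sum.distrib)
  qed
  moreover have "grext V f (s c x) y = s c (grext V f x y)" for c x
  proof -
    let ?A = "grsupp V x \<union> grsupp V (s c x)"
    have "grext V f u y = (\<Sum>a\<in>?A. \<Sum>b\<in>grsupp V y. f a b (grcomp V u a) (grcomp V y b))"
      if "u \<in> {x, s c x}" for u
      using that finite_grsupp by (intro grext_eq_sum) auto
    then show ?thesis
      by (simp add: grcomp_scale bilinear_map_simps[OF bilinear] module.scale_sum_right[OF graded_module])
  qed
  ultimately show ?thesis
    unfolding linear_iff_module_hom module_hom_iff using graded_module by blast
qed

end

lemma grext_bilinear:
  assumes "\<And>a b. bilinear_map s s s (f a b)"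
  shows "bilinear_map s s s (grext V f)"
  unfolding bilinear_map_def
proof (intro allI conjI)
  show "Vector_Spaces.linear s s (\<lambda>x. grext V f x y)" for y
    by (rule grext_linear_left) (rule assms)
  show "Vector_Spaces.linear s s (grext V f x)" for x
  proof -
    have "grext V f x = (\<lambda>y. grext V (\<lambda>b a v u. f a b u v) y x)"
      by (rule ext) (rule grext_swap)
    then show ?thesis
      using grext_linear_left[of "\<lambda>b a v u. f a b u v" x] bilinear_map_swap[OF assms] by simp
  qed
qed

end

section \<open>The F-manifold color algebra of a pre-F-manifold color algebra\<close>

locale pre_F_manifold_color_algebra =
  fixes s :: "'k::field \<Rightarrow> 'v::ab_group_add \<Rightarrow> 'v" (infixr \<open>*s\<close> 75)
    and V :: "'g::ab_group_add \<Rightarrow> 'v set"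
    and eps :: "'g \<Rightarrow> 'g \<Rightarrow> 'k"
    and d :: "'v \<Rightarrow> 'v \<Rightarrow> 'v" (infixl \<open>\<diamond>\<close> 70)
    and m :: "'v \<Rightarrow> 'v \<Rightarrow> 'v" (infixl \<open>\<star>\<close> 70)
  assumes skew_bicharacter: "skew_bicharacter eps"
    and pre_F_manifold_color: "pre_F_manifold_color s V eps (\<diamond>) (\<star>)"
begin

abbreviation dot :: "'v \<Rightarrow> 'v \<Rightarrow> 'v" (infixl \<open>\<cdot>\<close> 70)
  where "dot \<equiv> ind_dot s V eps (\<diamond>)"

abbreviation bracket :: "'v \<Rightarrow> 'v \<Rightarrow> 'v" (\<open>\<lbrakk>_,/ _\<rbrakk>\<close>)
  where "bracket \<equiv> ind_bracket s V eps (\<star>)"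

lemma zinbiel_color: "zinbiel_color s V eps (\<diamond>)"
  using pre_F_manifold_color by (simp add: pre_F_manifold_color_def)

lemma prelie_color: "prelie_color s V eps (\<star>)"
  using pre_F_manifold_color by (simp add: pre_F_manifold_color_def)

lemma graded: "graded_space s V"
  using zinbiel_color by (simp add: zinbiel_color_def)

sublocale vector_space s
  using graded by (simp add: graded_space_def)

lemma diamond_bilinear: "bilinear_map s s s (\<diamond>)"
  using zinbiel_color by (simp add: zinbiel_color_def)

lemma star_bilinear: "bilinear_map s s s (\<star>)"
  using prelie_color by (simp add: prelie_color_def)

lemmas diamond_simps [simp] = bilinear_map_simps[OF diamond_bilinear]
lemmas star_simps [simp] = bilinear_map_simps[OF star_bilinear]

lemma diamond_degree: "x \<in> V a \<Longrightarrow> y \<in> V b \<Longrightarrow> x \<diamond> y \<in> V (a + b)"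
  using zinbiel_color by (simp add: zinbiel_color_def graded_op_def)

lemma star_degree: "x \<in> V a \<Longrightarrow> y \<in> V b \<Longrightarrow> x \<star> y \<in> V (a + b)"
  using prelie_color by (simp add: prelie_color_def graded_op_def)

lemma eps_add: "eps a (b + c) = eps a b * eps a c" "eps (a + b) c = eps a c * eps b c"
  using skew_bicharacter by (simp_all add: skew_bicharacter_def)

lemma eps_skew: "eps a b * eps b a = 1"
  using skew_bicharacter by (simp add: skew_bicharacter_def)

text \<open>The cancellation law \<open>eps a b * eps b a = 1\<close> in the shapes it takes after
  AC-normalisation of products, so that the simplifier can apply it.\<close>
lemma eps_skew_cancel:
  "eps a b * (eps b a * z) = z"
  "eps a b * (w * eps b a) = w"
  "eps a b * (w * (eps b a * z)) = w * z"
  "eps a b * (w1 * (w2 * eps b a)) = w1 * w2"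
  "eps a b * (w1 * (w2 * (eps b a * z))) = w1 * (w2 * z)"
  "eps a b * (w1 * (w2 * (w3 * eps b a))) = w1 * (w2 * w3)"
  "eps a b * (w1 * (w2 * (w3 * (eps b a * z)))) = w1 * (w2 * (w3 * z))"
  using eps_skew[of a b] by (simp_all add: mult_ac)

lemmas graded_induct = graded_induct[OF graded, case_names zero add homogeneous]

lemma symmetrisation_bilinear:
  "bilinear_map s s s (\<lambda>x y. x \<diamond> y + c *s (y \<diamond> x))"
  "bilinear_map s s s (\<lambda>x y. x \<star> y - c *s (y \<star> x))"
  unfolding bilinear_map_def linear_iff_module_hom module_hom_iff
  by (simp_all add: module_axioms scale_left_commute algebra_simps)

lemma dot_bilinear: "bilinear_map s s s (\<cdot>)"
  unfolding ind_dot_def by (rule grext_bilinear[OF graded] symmetrisation_bilinear)+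

lemma bracket_bilinear: "bilinear_map s s s bracket"
  unfolding ind_bracket_def by (rule grext_bilinear[OF graded] symmetrisation_bilinear)+

lemmas dot_simps [simp] = bilinear_map_simps[OF dot_bilinear]
lemmas bracket_simps [simp] = bilinear_map_simps[OF bracket_bilinear]

lemma dot_homogeneous: "x \<in> V a \<Longrightarrow> y \<in> V b \<Longrightarrow> x \<cdot> y = x \<diamond> y + eps a b *s (y \<diamond> x)"
  unfolding ind_dot_def by (rule grext_of_homogeneous[OF graded] symmetrisation_bilinear)+

lemma bracket_homogeneous: "x \<in> V a \<Longrightarrow> y \<in> V b \<Longrightarrow> \<lbrakk>x, y\<rbrakk> = x \<star> y - eps a b *s (y \<star> x)"
  unfolding ind_bracket_def by (rule grext_of_homogeneous[OF graded] symmetrisation_bilinear)+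

lemma dot_degree: "x \<in> V a \<Longrightarrow> y \<in> V b \<Longrightarrow> x \<cdot> y \<in> V (a + b)"
  using diamond_degree[of x a y b] diamond_degree[of y b x a]
  by (simp add: dot_homogeneous homogeneous_add[OF graded] homogeneous_scale[OF graded] add.commute)

lemma bracket_degree: "x \<in> V a \<Longrightarrow> y \<in> V b \<Longrightarrow> \<lbrakk>x, y\<rbrakk> \<in> V (a + b)"
  using star_degree[of x a y b] star_degree[of y b x a]
  by (simp add: bracket_homogeneous homogeneous_diff[OF graded] homogeneous_scale[OF graded] add.commute)

lemma zinbiel:
  "x \<in> V a \<Longrightarrow> y \<in> V b \<Longrightarrow> z \<in> V c \<Longrightarrow> x \<diamond> (y \<diamond> z) = (x \<diamond> y) \<diamond> z + eps a b *s ((y \<diamond> x) \<diamond> z)"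
  using zinbiel_color unfolding zinbiel_color_def by blast

lemma diamond_dot_left: "(x \<cdot> y) \<diamond> z = x \<diamond> (y \<diamond> z)"
proof (induction x arbitrary: y rule: graded_induct)
  case (homogeneous a x)
  show ?case
  proof (induction y rule: graded_induct)
    case (homogeneous b y)
    show ?case
    proof (induction z rule: graded_induct)
      case (homogeneous c z)
      show ?case
        using zinbiel[OF \<open>x \<in> V a\<close> \<open>y \<in> V b\<close> \<open>z \<in> V c\<close>]
        by (simp add: dot_homogeneous[OF \<open>x \<in> V a\<close> \<open>y \<in> V b\<close>])
    qed simp_all
  qed simp_all
qed simp_all

lemma dot_commute: "x \<in> V a \<Longrightarrow> y \<in> V b \<Longrightarrow> x \<cdot> y = eps a b *s (y \<cdot> x)"
  by (simp add: dot_homogeneous scale_right_distrib eps_skew add.commute)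

lemma dot_assoc_homogeneous:
  assumes x: "x \<in> V a" and y: "y \<in> V b" and z: "z \<in> V c"
  shows "(x \<cdot> y) \<cdot> z = x \<cdot> (y \<cdot> z)"
proof -
  have "z \<diamond> (x \<cdot> y) = (z \<cdot> x) \<diamond> y + eps a b *s ((z \<cdot> y) \<diamond> x)"
    by (simp add: dot_homogeneous[OF x y] diamond_dot_left)
  also have "\<dots> = eps c a *s ((x \<cdot> z) \<diamond> y) + (eps a b * eps c b) *s ((y \<cdot> z) \<diamond> x)"
    by (simp add: dot_commute[OF z x] dot_commute[OF z y] mult.commute)
  finally have "(x \<cdot> y) \<cdot> z = x \<diamond> (y \<diamond> z) + eps b c *s ((x \<cdot> z) \<diamond> y) + eps a (b + c) *s ((y \<cdot> z) \<diamond> x)"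
    using dot_homogeneous[OF dot_degree[OF x y] z]
    by (simp add: diamond_dot_left eps_add scale_right_distrib eps_skew eps_skew_cancel add.assoc mult_ac)
  also have "\<dots> = x \<cdot> (y \<cdot> z)"
    using dot_homogeneous[OF x dot_degree[OF y z]] dot_homogeneous[OF y z]
    by (simp add: diamond_dot_left add.assoc)
  finally show ?thesis .
qed

lemma dot_assoc: "(x \<cdot> y) \<cdot> z = x \<cdot> (y \<cdot> z)"
proof (induction x arbitrary: y z rule: graded_induct)
  case (homogeneous a x)
  show ?case
  proof (induction y arbitrary: z rule: graded_induct)
    case (homogeneous b y)
    show ?case
    proof (induction z rule: graded_induct)
      case (homogeneous c z)
      show ?case by (rule dot_assoc_homogeneous) fact+
    qed simp_all
  qed simp_all
qed simp_all

lemma eps_comm_assoc_dot: "eps_comm_assoc s V eps (\<cdot>)"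
  unfolding eps_comm_assoc_def graded_op_def
  using graded dot_bilinear dot_degree dot_assoc dot_commute by blast

lemma prelie:
  "x \<in> V a \<Longrightarrow> y \<in> V b \<Longrightarrow> z \<in> V c \<Longrightarrow>
    (x \<star> y) \<star> z - x \<star> (y \<star> z) = eps a b *s ((y \<star> x) \<star> z - y \<star> (x \<star> z))"
  using prelie_color unfolding prelie_color_def by blast

lemma star_bracket_left:
  assumes x: "x \<in> V a" and y: "y \<in> V b"
  shows "\<lbrakk>x, y\<rbrakk> \<star> z = x \<star> (y \<star> z) - eps a b *s (y \<star> (x \<star> z))"
proof (induction z rule: graded_induct)
  case (homogeneous c z)
  show ?case
    using prelie[OF x y homogeneous] by (simp add: bracket_homogeneous[OF x y] algebra_simps)
qed (simp_all add: algebra_simps)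

lemma bracket_skew: "x \<in> V a \<Longrightarrow> y \<in> V b \<Longrightarrow> \<lbrakk>x, y\<rbrakk> = - (eps a b *s \<lbrakk>y, x\<rbrakk>)"
  by (simp add: bracket_homogeneous scale_right_diff_distrib eps_skew)

text \<open>Once \<open>\<lbrakk>y, z\<rbrakk> \<star> x\<close> is written as a commutator of left multiplications, all twelve
  terms have the form \<open>u \<star> (v \<star> w)\<close> and cancel in pairs.\<close>
lemma bracket_jacobi:
  assumes x: "x \<in> V a" and y: "y \<in> V b" and z: "z \<in> V c"
  shows "eps c a *s \<lbrakk>x, \<lbrakk>y, z\<rbrakk>\<rbrakk> + eps b c *s \<lbrakk>z, \<lbrakk>x, y\<rbrakk>\<rbrakk> + eps a b *s \<lbrakk>y, \<lbrakk>z, x\<rbrakk>\<rbrakk> = 0"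
  unfolding bracket_homogeneous[OF x bracket_degree[OF y z]] bracket_homogeneous[OF z bracket_degree[OF x y]]
    bracket_homogeneous[OF y bracket_degree[OF z x]]
    star_bracket_left[OF x y] star_bracket_left[OF y z] star_bracket_left[OF z x]
  unfolding bracket_homogeneous[OF x y] bracket_homogeneous[OF y z] bracket_homogeneous[OF z x]
  by (simp add: eps_add algebra_simps eps_skew_cancel eps_skew)

lemma lie_color_bracket: "lie_color s V eps bracket"
  unfolding lie_color_def graded_op_def
  using graded bracket_bilinear bracket_degree bracket_skew bracket_jacobi by blast

abbreviation F\<^sub>1 :: "'g \<Rightarrow> 'g \<Rightarrow> 'v \<Rightarrow> 'v \<Rightarrow> 'v \<Rightarrow> 'v"
  where "F\<^sub>1 \<equiv> F1 s V eps (\<diamond>) (\<star>)"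

abbreviation F\<^sub>2 :: "'g \<Rightarrow> 'g \<Rightarrow> 'v \<Rightarrow> 'v \<Rightarrow> 'v \<Rightarrow> 'v"
  where "F\<^sub>2 \<equiv> F2 s V eps (\<diamond>) (\<star>)"

abbreviation P :: "'g \<Rightarrow> 'g \<Rightarrow> 'v \<Rightarrow> 'v \<Rightarrow> 'v \<Rightarrow> 'v"
  where "P \<equiv> Pfm s eps (\<cdot>) bracket"

lemma F1_F2_P_linear_last [simp]:
  "F\<^sub>1 a b x y (u + v) = F\<^sub>1 a b x y u + F\<^sub>1 a b x y v"
  "F\<^sub>2 a b x y (u + v) = F\<^sub>2 a b x y u + F\<^sub>2 a b x y v"
  "P a b x y (u + v) = P a b x y u + P a b x y v"
  "F\<^sub>1 a b x y (k *s u) = k *s F\<^sub>1 a b x y u"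
  "F\<^sub>2 a b x y (k *s u) = k *s F\<^sub>2 a b x y u"
  "P a b x y (k *s u) = k *s P a b x y u"
  "F\<^sub>1 a b x y 0 = 0" "F\<^sub>2 a b x y 0 = 0" "P a b x y 0 = 0"
  by (simp_all add: F1_def F2_def Pfm_def algebra_simps scale_left_commute)

lemma P_eq_F1_F2:
  assumes x: "x \<in> V a" and y: "y \<in> V b" and z: "z \<in> V c"
  shows "P a b x y z = F\<^sub>1 a b x y z + eps b c *s F\<^sub>1 a c x z y + eps a (b + c) *s F\<^sub>2 b c y z x"
  unfolding Pfm_def F1_def F2_def
  unfolding bracket_homogeneous[OF x dot_degree[OF y z]] dot_homogeneous[OF bracket_degree[OF x y] z]
    dot_homogeneous[OF y bracket_degree[OF x z]]
  unfolding bracket_homogeneous[OF x y] bracket_homogeneous[OF x z] dot_homogeneous[OF y z]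
  by (simp add: eps_add algebra_simps eps_skew eps_skew_cancel)

lemma P_degree:
  assumes x: "x \<in> V a" and y: "y \<in> V b" and z: "z \<in> V c"
  shows "P a b x y z \<in> V (a + b + c)"
proof -
  have "\<lbrakk>x, y \<cdot> z\<rbrakk> \<in> V (a + b + c)"
    using bracket_degree[OF x dot_degree[OF y z]] by (simp add: add.assoc)
  moreover have "\<lbrakk>x, y\<rbrakk> \<cdot> z \<in> V (a + b + c)"
    using dot_degree[OF bracket_degree[OF x y] z] .
  moreover have "y \<cdot> \<lbrakk>x, z\<rbrakk> \<in> V (a + b + c)"
    using dot_degree[OF y bracket_degree[OF x z]] by (simp add: add_ac)
  ultimately show ?thesis
    unfolding Pfm_def by (intro homogeneous_diff[OF graded] homogeneous_scale[OF graded])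
qed

lemma F1_dot_left:
  assumes x: "x \<in> V a" and y: "y \<in> V b" and z: "z \<in> V c"
  shows "F\<^sub>1 (a + b) c (x \<cdot> y) z w = x \<diamond> F\<^sub>1 b c y z w + eps a b *s (y \<diamond> F\<^sub>1 a c x z w)"
proof (induction w rule: graded_induct)
  case (homogeneous e w)
  with x y z pre_F_manifold_color show ?case unfolding pre_F_manifold_color_def by blast
qed (simp_all add: algebra_simps)

lemma diamond_P_left:
  assumes x: "x \<in> V a" and y: "y \<in> V b" and z: "z \<in> V c"
  shows "P a b x y z \<diamond> w = eps a (b + c) *s F\<^sub>2 b c y z (x \<diamond> w) - x \<diamond> F\<^sub>2 b c y z w"
proof (induction w rule: graded_induct)
  case (homogeneous e w)
  with x y z pre_F_manifold_color show ?case
    unfolding P_eq_F1_F2[OF x y z] pre_F_manifold_color_def by blast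
qed (simp_all add: algebra_simps)

lemma F2_diamond_right:
  assumes x: "x \<in> V a" and z: "z \<in> V c" and w: "w \<in> V e"
  shows "F\<^sub>2 c e z w (x \<diamond> y) = eps (c + e) a *s (P a c x z w \<diamond> y + x \<diamond> F\<^sub>2 c e z w y)"
  by (simp add: diamond_P_left[OF x z w] eps_skew)

text \<open>Both sides are expanded by \<open>P_eq_F1_F2\<close>; the \<open>F\<^sub>1\<close>-terms on the left are
  rewritten by the first compatibility axiom, and \<open>F\<^sub>2(z, w, x \<cdot> y)\<close> by the second one.\<close>
lemma hertling_manin_homogeneous:
  assumes x: "x \<in> V a" and y: "y \<in> V b" and z: "z \<in> V c" and w: "w \<in> V e"
  shows "P (a + b) c (x \<cdot> y) z w = x \<cdot> P b c y z w + eps a b *s (y \<cdot> P a c x z w)"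
proof -
  have Py: "P b c y z w \<in> V (b + c + e)" and Px: "P a c x z w \<in> V (a + c + e)"
    using P_degree x y z w by auto
  have Dx: "x \<diamond> P b c y z w = x \<diamond> F\<^sub>1 b c y z w + eps c e *s (x \<diamond> F\<^sub>1 b e y w z)
      + eps b (c + e) *s (x \<diamond> F\<^sub>2 c e z w y)"
    by (simp add: P_eq_F1_F2[OF y z w])
  have Dy: "y \<diamond> P a c x z w = y \<diamond> F\<^sub>1 a c x z w + eps c e *s (y \<diamond> F\<^sub>1 a e x w z)
      + eps a (c + e) *s (y \<diamond> F\<^sub>2 c e z w x)"
    by (simp add: P_eq_F1_F2[OF x z w])
  show ?thesis
    unfolding P_eq_F1_F2[OF dot_degree[OF x y] z w] F1_dot_left[OF x y z] F1_dot_left[OF x y w]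
    unfolding dot_homogeneous[OF x y] F1_F2_P_linear_last F2_diamond_right[OF x z w]
      F2_diamond_right[OF y z w] dot_homogeneous[OF x Py] dot_homogeneous[OF y Px] Dx Dy
    by (simp add: eps_add algebra_simps eps_skew eps_skew_cancel)
qed

lemma hertling_manin:
  assumes "x \<in> V a" "y \<in> V b" "z \<in> V c"
  shows "P (a + b) c (x \<cdot> y) z w = x \<cdot> P b c y z w + eps a b *s (y \<cdot> P a c x z w)"
proof (induction w rule: graded_induct)
  case (homogeneous e w)
  show ?case by (rule hertling_manin_homogeneous[OF assms homogeneous])
qed (simp_all add: algebra_simps)

lemma F_manifold_color_induced: "F_manifold_color s V eps (\<cdot>) bracket"
  unfolding F_manifold_color_def using eps_comm_assoc_dot lie_color_bracket hertling_manin by blast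

lemma representation_induced: "fm_representation s V eps (\<cdot>) bracket s V (\<star>) (\<diamond>)"
  unfolding fm_representation_def Let_def graded_op_def
  by (intro conjI allI impI;
      (assumption | rule graded star_bilinear diamond_bilinear star_degree diamond_degree
        star_bracket_left diamond_dot_left F1_dot_left[unfolded F1_def]
        diamond_P_left[unfolded F2_def])+)

end

theorem theorem4p4:
  fixes s :: "'k::field_char_0 \<Rightarrow> 'v::ab_group_add \<Rightarrow> 'v"
    and V :: "'g::ab_group_add \<Rightarrow> 'v set"
    and eps :: "'g \<Rightarrow> 'g \<Rightarrow> 'k"
    and d m :: "'v \<Rightarrow> 'v \<Rightarrow> 'v"
  assumes "alg_closed_field TYPE('k)"
    and "skew_bicharacter eps"
    and "graded_space s V"
    and "fin_dim s"
    and "pre_F_manifold_color s V eps d m"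
  shows "F_manifold_color s V eps (ind_dot s V eps d) (ind_bracket s V eps m)
         \<and> fm_representation s V eps (ind_dot s V eps d) (ind_bracket s V eps m) s V m d"
proof -
  interpret pre_F_manifold_color_algebra s V eps d m
    using assms(2,5) by unfold_locales
  show ?thesis
    using F_manifold_color_induced representation_induced by blast
qed

end
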